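(* Let $(\Omega,\Sigma,\mathbb{P})$ be a probability space, let $0<\beta\leqslant1$, and let $\mathcal{A},\mathcal{B}$ be sub-$\sigma$-algebras of $\Sigma$ which are $\beta$-mixing. Let $1\leqslant r<p\leqslant\infty$ and let $X\in L_p$. Then \[ \big\|\mathbb{E}\big[\mathbb{E}[X\,|\,\mathcal{A}]\,|\,\mathcal{B}\big]-\mathbb{E}[X]\big\|_{L_r}\leqslant10\,\beta^{\frac1r-\frac1p}\,\|X-\mathbb{E}[X]\|_{L_p}. \]
   Context: Two sub-$\sigma$-algebras $\mathcal{A},\mathcal{B}$ of $\Sigma$ are $\beta$-mixing if $|\mathbb{P}(A\cap B)-\mathbb{P}(A)\mathbb{P}(B)|\leqslant\beta$ for every $A\in\mathcal{A}$ and $B\in\mathcal{B}$. *)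

theory Defs
  imports "HOL-Probability.Probability"
begin

definition beta_mixing :: "'a measure \<Rightarrow> 'a measure \<Rightarrow> 'a measure \<Rightarrow> real \<Rightarrow> bool" where
  "beta_mixing M A B \<beta> \<longleftrightarrow>
     (\<forall>a\<in>sets A. \<forall>b\<in>sets B. \<bar>measure M (a \<inter> b) - measure M a * measure M b\<bar> \<le> \<beta>)"

definition lp_norm :: "'a measure \<Rightarrow> ennreal \<Rightarrow> ('a \<Rightarrow> real) \<Rightarrow> ennreal" where
  "lp_norm M p f =
     (if p = \<infinity> then esssup M (\<lambda>x. ennreal \<bar>f x\<bar>)
      else (let I = (\<integral>\<^sup>+ x. ennreal (\<bar>f x\<bar> powr enn2real p) \<partial>M) in
            if I = \<infinity> then \<infinity> else ennreal (enn2real I powr (1 / enn2real p))))"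

definition recip_exp :: "ennreal \<Rightarrow> real" where
  "recip_exp p = (if p = \<infinity> then 0 else 1 / enn2real p)"

end

theory Submission
  imports Defs
begin

text \<open>
  Let Z = E[X|A] and split Z - E X at a level l into a part bounded by l and a large part.
  Mixing gives Cov(U, S) \<le> 4 \<beta> l for A-measurable U with |U| \<le> l and B-measurable S with
  |S| \<le> 1: conditioning on A, and then on B, and testing against the sign of the conditional
  deviation reduces both factors to differences of two indicators. Testing once more against the
  sign of E[U|B] - E U bounds the L_1 deviation of the bounded part by 4 \<beta> l, hence, as this
  deviation is at most 2 l, its r-th moment by a multiple of \<beta> l^r. The large part is controlled
  by conditional Jensen and truncation: E |large part|^r \<le> l^(r-p) E |X - E X|^p.
  Choosing l^p = E |X - E X|^p / \<beta> balances the two terms; for p = \<infinity> take l = |X - E X|_\<infinity>,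
  for which the large part vanishes.
\<close>

section \<open>Elementary inequalities\<close>

lemma convex_on_nonneg_powr:
  assumes "1 \<le> (r::real)"
  shows "convex_on {0..} (\<lambda>x::real. x powr r)"
proof (rule convex_on_linorderI)
  fix t x y :: real
  assume t: "0 < t" "t < 1" and xy: "x \<in> {0..}" "y \<in> {0..}" "x < y"
  show "((1 - t) *\<^sub>R x + t *\<^sub>R y) powr r \<le> (1 - t) * x powr r + t * y powr r"
  proof (cases "x = 0")
    case True
    have "(t * y) powr r = t powr r * y powr r" using t xy by (simp add: powr_mult)
    also have "\<dots> \<le> t * y powr r" using t assms by (intro mult_right_mono powr_le_one_le) auto
    finally show ?thesis using True by simp
  next
    case False
    with xy have "x \<in> {0<..}" "y \<in> {0<..}" by auto
    from convex_onD[OF powr_convex[OF assms] _ _ this, of t] t show ?thesis by simp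
  qed
qed simp

lemma convex_on_abs_powr:
  assumes "1 \<le> (r::real)"
  shows "convex_on UNIV (\<lambda>x::real. \<bar>x\<bar> powr r)"
proof (rule convex_onI)
  fix t x y :: real
  assume t: "0 < t" "t < 1"
  have "\<bar>(1 - t) *\<^sub>R x + t *\<^sub>R y\<bar> powr r \<le> ((1 - t) *\<^sub>R \<bar>x\<bar> + t *\<^sub>R \<bar>y\<bar>) powr r"
    using t assms by (intro powr_mono2) (auto intro!: order.trans[OF abs_triangle_ineq] simp: abs_mult)
  also have "\<dots> \<le> (1 - t) * \<bar>x\<bar> powr r + t * \<bar>y\<bar> powr r"
    using convex_onD[OF convex_on_nonneg_powr[OF assms], of t "\<bar>x\<bar>" "\<bar>y\<bar>"] t by simp
  finally show "\<bar>(1 - t) *\<^sub>R x + t *\<^sub>R y\<bar> powr r \<le> (1 - t) * \<bar>x\<bar> powr r + t * \<bar>y\<bar> powr r" .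
qed simp

lemma abs_add_powr_le:
  assumes "1 \<le> (r::real)"
  shows "\<bar>a + b\<bar> powr r \<le> 2 powr (r - 1) * (\<bar>a\<bar> powr r + \<bar>b\<bar> powr r)"
proof -
  have "\<bar>(1 - 1/2) *\<^sub>R (2*a) + (1/2) *\<^sub>R (2*b)\<bar> powr r \<le> (1 - 1/2) * \<bar>2*a\<bar> powr r + (1/2) * \<bar>2*b\<bar> powr r"
    by (rule convex_onD[OF convex_on_abs_powr[OF assms]]) auto
  also have "\<dots> = 2 powr r / 2 * (\<bar>a\<bar> powr r + \<bar>b\<bar> powr r)"
    by (simp add: abs_mult powr_mult algebra_simps)
  also have "2 powr r / 2 = 2 powr (r - 1)" by (simp add: powr_diff)
  finally show ?thesis by simp
qed

lemma abs_powr_le_mult_abs: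
  assumes "1 \<le> (r::real)" and "\<bar>v\<bar> \<le> c"
  shows "\<bar>v\<bar> powr r \<le> c powr (r - 1) * \<bar>v\<bar>"
proof (cases "v = 0")
  case False
  have "\<bar>v\<bar> powr r = \<bar>v\<bar> powr (r - 1) * \<bar>v\<bar>" using False by (simp add: powr_diff)
  also have "\<dots> \<le> c powr (r - 1) * \<bar>v\<bar>" using assms by (auto intro!: mult_right_mono powr_mono2)
  finally show ?thesis .
qed simp

lemma abs_le_one_plus_abs_powr:
  assumes "1 \<le> (q::real)"
  shows "\<bar>y\<bar> \<le> 1 + \<bar>y\<bar> powr q"
proof (cases "\<bar>y\<bar> \<le> 1")
  case False
  then have "\<bar>y\<bar> powr 1 \<le> \<bar>y\<bar> powr q" using assms by (intro powr_mono) auto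
  then show ?thesis using False by simp
qed (simp add: add_increasing2)

definition large_part :: "real \<Rightarrow> real \<Rightarrow> real" where
  "large_part l t = (if \<bar>t\<bar> \<le> l then 0 else t)"

lemma abs_large_part_powr_le:
  assumes "0 < l" and "r < q"
  shows "\<bar>large_part l t\<bar> powr r \<le> l powr (r - q) * \<bar>t\<bar> powr q"
proof (cases "\<bar>t\<bar> \<le> l")
  case False
  have "\<bar>t\<bar> powr r = \<bar>t\<bar> powr (r - q) * \<bar>t\<bar> powr q" by (simp flip: powr_add)
  also have "\<dots> \<le> l powr (r - q) * \<bar>t\<bar> powr q"
    using False assms by (intro mult_right_mono powr_mono2') auto
  finally show ?thesis using False by (simp add: large_part_def)
qed (simp add: large_part_def)

lemma borel_measurable_large_part [measurable]: "large_part l \<in> borel_measurable borel"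
  unfolding large_part_def[abs_def] by measurable

lemma truncation_bound_at_balanced_level:
  fixes r q \<beta> Q :: real
  assumes r: "1 \<le> r" "r < q" and \<beta>: "0 < \<beta>" and Q: "0 < Q"
  defines "l \<equiv> (Q / \<beta>) powr (1 / q)"
  shows "4 powr r * (\<beta> * l powr r + l powr (r - q) * Q / 2)
         \<le> (10 * \<beta> powr (1 / r - 1 / q) * Q powr (1 / q)) powr r"
proof -
  have l: "0 < l" "l powr q = Q / \<beta>" using Q \<beta> r unfolding l_def by (auto simp: powr_powr)
  have balance: "l powr (r - q) * Q = \<beta> * l powr r" using l \<beta> Q by (simp add: powr_diff)
  have "4 powr r * (3 / 2) \<le> 4 powr r * (5 / 2) powr r"
    using r by (intro mult_left_mono order.trans[OF _ powr_mono[of 1 r]]) auto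
  also have "\<dots> = 10 powr r" by (simp flip: powr_mult)
  finally have ten_powr: "4 powr r * (3 / 2) \<le> (10::real) powr r" .
  have "4 powr r * (\<beta> * l powr r + l powr (r - q) * Q / 2) = 4 powr r * (3 / 2) * (\<beta> * l powr r)"
    unfolding balance by (simp add: algebra_simps)
  also have "\<dots> \<le> 10 powr r * (\<beta> * l powr r)"
    using ten_powr \<beta> by (intro mult_right_mono) auto
  also have "\<dots> = (10 * \<beta> powr (1 / r) * l) powr r"
    using \<beta> l(1) r by (simp add: powr_mult powr_powr)
  also have "10 * \<beta> powr (1 / r) * l = 10 * \<beta> powr (1 / r - 1 / q) * Q powr (1 / q)"
    using \<beta> Q unfolding l_def by (simp add: powr_diff powr_divide)
  finally show ?thesis .
qed

section \<open>\<open>L\<^sub>p\<close> norms\<close>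

lemma lp_norm_ennreal_eq:
  assumes "0 < q" and "integrable M (\<lambda>x. \<bar>f x\<bar> powr q)"
  shows "lp_norm M (ennreal q) f = ennreal ((\<integral>x. \<bar>f x\<bar> powr q \<partial>M) powr (1 / q))"
proof -
  have "(\<integral>\<^sup>+ x. ennreal (\<bar>f x\<bar> powr q) \<partial>M) = ennreal (\<integral>x. \<bar>f x\<bar> powr q \<partial>M)"
    by (rule nn_integral_eq_integral[OF assms(2)]) auto
  then show ?thesis using assms(1) by (simp add: lp_norm_def Let_def)
qed

lemma integrable_abs_powr_if_lp_norm_finite:
  assumes "f \<in> borel_measurable M" and "0 \<le> q" and "lp_norm M (ennreal q) f < \<infinity>"
  shows "integrable M (\<lambda>x. \<bar>f x\<bar> powr q)"
proof (rule integrableI_bounded)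
  show "(\<lambda>x. \<bar>f x\<bar> powr q) \<in> borel_measurable M" using assms(1) by measurable
  show "(\<integral>\<^sup>+ x. ennreal (norm (\<bar>f x\<bar> powr q)) \<partial>M) < \<infinity>"
    using assms(2,3) by (auto simp: lp_norm_def Let_def less_top split: if_splits)
qed

lemma lp_norm_le_if_powr_integral_le:
  assumes "0 < r" and "integrable M (\<lambda>x. \<bar>f x\<bar> powr r)"
    and "(\<integral>x. \<bar>f x\<bar> powr r \<partial>M) \<le> T powr r" and "0 \<le> T"
  shows "lp_norm M (ennreal r) f \<le> ennreal T"
proof -
  have "(\<integral>x. \<bar>f x\<bar> powr r \<partial>M) powr (1 / r) \<le> (T powr r) powr (1 / r)"
    using assms by (intro powr_mono2) auto
  also have "\<dots> = T" using assms by (simp add: powr_powr)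
  finally show ?thesis using assms by (simp add: lp_norm_ennreal_eq ennreal_leI)
qed

section \<open>Covariances and conditional expectations\<close>

definition covariance :: "'a measure \<Rightarrow> ('a \<Rightarrow> real) \<Rightarrow> ('a \<Rightarrow> real) \<Rightarrow> real" where
  "covariance M f g = (\<integral>x. f x * g x \<partial>M) - (\<integral>x. f x \<partial>M) * (\<integral>x. g x \<partial>M)"

lemma covariance_commute: "covariance M f g = covariance M g f"
  by (simp add: covariance_def mult.commute)

context prob_space
begin

lemma sigma_finite_subalgebraI: "subalgebra M F \<Longrightarrow> sigma_finite_subalgebra M F"
  by (rule finite_measure_subalgebra_is_sigma_finite)
     (simp add: finite_measure_subalgebra_def finite_measure_subalgebra_axioms_def finite_measure_axioms)

lemma real_cond_exp_diff_const:
  assumes "subalgebra M F" and "integrable M f"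
  shows "AE x in M. real_cond_exp M F (\<lambda>x. f x - c) x = real_cond_exp M F f x - c"
proof -
  interpret F: sigma_finite_subalgebra M F using sigma_finite_subalgebraI assms(1) .
  have "AE x in M. real_cond_exp M F (\<lambda>x. f x - c) x = real_cond_exp M F f x - real_cond_exp M F (\<lambda>x. c) x"
    using assms(2) by (intro F.real_cond_exp_diff) auto
  moreover have "AE x in M. real_cond_exp M F (\<lambda>x. c) x = c"
    by (intro F.real_cond_exp_F_meas) auto
  ultimately show ?thesis by eventually_elim simp
qed

lemma integrable_of_integrable_abs_powr:
  fixes q :: real
  assumes "1 \<le> q" and [measurable]: "f \<in> borel_measurable M"
    and "integrable M (\<lambda>x. \<bar>f x\<bar> powr q)"
  shows "integrable M f"
proof (rule Bochner_Integration.integrable_bound)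
  show "integrable M (\<lambda>x. 1 + \<bar>f x\<bar> powr q)" using assms(3) by simp
  show "AE x in M. norm (f x) \<le> norm (1 + \<bar>f x\<bar> powr q)"
    using abs_le_one_plus_abs_powr[OF assms(1)] by (auto intro!: AE_I2 order.trans[OF _ abs_ge_self])
qed simp

lemma abs_cond_exp_deviation_le:
  assumes F: "subalgebra M F" and U [measurable]: "U \<in> borel_measurable M"
    and U_bounded: "\<And>x. x \<in> space M \<Longrightarrow> \<bar>U x\<bar> \<le> l"
  shows "AE x in M. \<bar>real_cond_exp M F U x - expectation U\<bar> \<le> 2 * l"
proof -
  interpret F: sigma_finite_subalgebra M F using sigma_finite_subalgebraI F .
  have int_U: "integrable M U" by (rule integrable_const_bound[where B=l]) (use U_bounded in auto)
  have U_AE: "AE x in M. U x \<le> l" "AE x in M. - l \<le> U x"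
    using U_bounded by (auto intro!: AE_I2 simp: abs_le_iff minus_le_iff)
  have mean: "\<bar>expectation U\<bar> \<le> l"
    using integral_le_const[OF int_U U_AE(1)] integral_ge_const[OF int_U U_AE(2)] by (simp add: abs_le_iff)
  have "AE x in M. \<bar>real_cond_exp M F U x\<bar> \<le> l"
    using F.real_cond_exp_le_c[OF int_U U_AE(1)] F.real_cond_exp_ge_c[OF int_U U_AE(2)]
    by eventually_elim (simp add: abs_le_iff)
  then show ?thesis by (rule eventually_mono) (use mean in \<open>auto simp: abs_le_iff\<close>)
qed

lemma integral_abs_cond_exp_deviation:
  assumes F: "subalgebra M F" and S: "integrable M S"
  obtains a1 a2 where "a1 \<in> sets F" "a2 \<in> sets F"
    and "(\<integral>x. \<bar>real_cond_exp M F S x - expectation S\<bar> \<partial>M)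
         = covariance M (\<lambda>x. indicator a1 x - indicator a2 x) S"
proof -
  interpret F: sigma_finite_subalgebra M F using sigma_finite_subalgebraI F .
  have [measurable]: "S \<in> borel_measurable M" using S by (rule borel_measurable_integrable)
  define G where "G = real_cond_exp M F S"
  define m where "m = expectation S"
  define a1 where "a1 = {x \<in> space F. m < G x}"
  define a2 where "a2 = {x \<in> space F. G x < m}"
  define \<xi> where "\<xi> = (\<lambda>x. indicator a1 x - indicator a2 x :: real)"
  have sets: "a1 \<in> sets F" "a2 \<in> sets F" unfolding a1_def a2_def G_def by measurable
  have \<xi>F [measurable]: "\<xi> \<in> borel_measurable F" unfolding \<xi>_def using sets by measurable
  have \<xi>M [measurable]: "\<xi> \<in> borel_measurable M" using measurable_from_subalg[OF F \<xi>F] .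
  have \<xi>_bounded: "\<bar>\<xi> x\<bar> \<le> 1" for x unfolding \<xi>_def by (auto simp: indicator_def)
  have int_\<xi>: "integrable M \<xi>" by (rule integrable_const_bound[where B=1]) (use \<xi>_bounded in auto)
  have int_\<xi>S: "integrable M (\<lambda>x. \<xi> x * S x)"
    by (rule Bochner_Integration.integrable_bound[OF integrable_norm[OF S]])
       (use \<xi>_bounded in \<open>auto simp: abs_mult intro!: mult_left_le_one_le\<close>)
  have "(\<integral>x. \<bar>G x - m\<bar> \<partial>M) = (\<integral>x. \<xi> x * G x - \<xi> x * m \<partial>M)"
    using F.subalg
    by (intro Bochner_Integration.integral_cong)
       (auto simp: \<xi>_def a1_def a2_def indicator_def subalgebra_def)
  also have "\<dots> = (\<integral>x. \<xi> x * G x \<partial>M) - (\<integral>x. \<xi> x \<partial>M) * m"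
    using F.real_cond_exp_intg(1)[OF int_\<xi>S \<xi>F] int_\<xi> unfolding G_def by simp
  also have "(\<integral>x. \<xi> x * G x \<partial>M) = (\<integral>x. \<xi> x * S x \<partial>M)"
    unfolding G_def by (rule F.real_cond_exp_intg(2)[OF int_\<xi>S \<xi>F]) measurable
  finally show ?thesis
    using that sets unfolding covariance_def G_def m_def \<xi>_def by simp
qed

lemma covariance_le_of_indicator_diffs:
  assumes F: "subalgebra M F"
    and U [measurable]: "U \<in> borel_measurable F" and U_bounded: "\<And>x. x \<in> space M \<Longrightarrow> \<bar>U x\<bar> \<le> l"
    and S: "integrable M S"
    and K: "\<And>a1 a2. a1 \<in> sets F \<Longrightarrow> a2 \<in> sets F \<Longrightarrow>
              covariance M (\<lambda>x. indicator a1 x - indicator a2 x) S \<le> K"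
  shows "covariance M U S \<le> l * K"
proof -
  interpret F: sigma_finite_subalgebra M F using sigma_finite_subalgebraI F .
  have [measurable]: "S \<in> borel_measurable M" using S by (rule borel_measurable_integrable)
  have UM [measurable]: "U \<in> borel_measurable M" using measurable_from_subalg[OF F U] .
  obtain x0 where "x0 \<in> space M" using not_empty by blast
  then have l: "0 \<le> l" using U_bounded by (meson abs_ge_zero order.trans)
  have int_U: "integrable M U" by (rule integrable_const_bound[where B=l]) (use U_bounded in auto)
  have int_US: "integrable M (\<lambda>x. U x * S x)"
    by (rule Bochner_Integration.integrable_bound[OF integrable_mult_right[OF integrable_norm[OF S], of l]])
       (use U_bounded l in \<open>auto simp: abs_mult intro!: AE_I2 mult_right_mono\<close>)
  define G where "G = real_cond_exp M F S"
  define m where "m = expectation S"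
  have int_G: "integrable M G" unfolding G_def by (rule F.real_cond_exp_int(1)[OF S])
  have int_UG: "integrable M (\<lambda>x. U x * G x)" and UG: "(\<integral>x. U x * G x \<partial>M) = (\<integral>x. U x * S x \<partial>M)"
    unfolding G_def using F.real_cond_exp_intg[OF int_US U] by auto
  obtain a1 a2 where a: "a1 \<in> sets F" "a2 \<in> sets F"
    and deviation: "(\<integral>x. \<bar>G x - m\<bar> \<partial>M) = covariance M (\<lambda>x. indicator a1 x - indicator a2 x) S"
    using integral_abs_cond_exp_deviation[OF F S] unfolding G_def m_def by blast
  \<comment> \<open>U is F-measurable, so S may be replaced by G = E[S|F].\<close>
  have "covariance M U S = (\<integral>x. U x * (G x - m) \<partial>M)"
    using int_UG int_U UG by (simp add: covariance_def m_def right_diff_distrib)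
  also have "\<dots> \<le> (\<integral>x. l * \<bar>G x - m\<bar> \<partial>M)"
  proof (rule integral_mono)
    show "integrable M (\<lambda>x. U x * (G x - m))" using int_UG int_U by (simp add: right_diff_distrib)
    show "integrable M (\<lambda>x. l * \<bar>G x - m\<bar>)" using int_G by simp
    fix x assume "x \<in> space M"
    have "U x * (G x - m) \<le> \<bar>U x\<bar> * \<bar>G x - m\<bar>" by (simp flip: abs_mult)
    also have "\<dots> \<le> l * \<bar>G x - m\<bar>" using U_bounded[OF \<open>x \<in> space M\<close>] by (rule mult_right_mono) simp
    finally show "U x * (G x - m) \<le> l * \<bar>G x - m\<bar>" .
  qed
  also have "\<dots> \<le> l * K" using deviation K[OF a] l by (simp add: mult_left_mono)
  finally show ?thesis .
qed

lemma cond_exp_abs_powr_integral_le: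
  fixes q :: real
  assumes F: "subalgebra M F" and q: "1 \<le> q"
    and f: "integrable M f" and fq: "integrable M (\<lambda>x. \<bar>f x\<bar> powr q)"
  shows "integrable M (\<lambda>x. \<bar>real_cond_exp M F f x\<bar> powr q)"
    and "(\<integral>x. \<bar>real_cond_exp M F f x\<bar> powr q \<partial>M) \<le> (\<integral>x. \<bar>f x\<bar> powr q \<partial>M)"
proof -
  interpret F: sigma_finite_subalgebra M F using sigma_finite_subalgebraI F .
  have interval: "(UNIV::real set) = {0<..<1} \<or> UNIV = {0<..} \<or> UNIV = {..<1} \<or> UNIV = (UNIV :: real set)"
    by simp
  note convex = convex_on_abs_powr[OF q]
  show int: "integrable M (\<lambda>x. \<bar>real_cond_exp M F f x\<bar> powr q)"
    using F.integrable_convex_cond_exp[OF f _ interval fq convex] by simp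
  have "AE x in M. \<bar>real_cond_exp M F f x\<bar> powr q \<le> real_cond_exp M F (\<lambda>x. \<bar>f x\<bar> powr q) x"
    using F.real_cond_exp_jensens_inequality(2)[OF f _ interval fq convex] by simp
  then have "(\<integral>x. \<bar>real_cond_exp M F f x\<bar> powr q \<partial>M) \<le> (\<integral>x. real_cond_exp M F (\<lambda>x. \<bar>f x\<bar> powr q) x \<partial>M)"
    by (rule integral_mono_AE[OF int F.real_cond_exp_int(1)[OF fq]])
  also have "\<dots> = (\<integral>x. \<bar>f x\<bar> powr q \<partial>M)" by (rule F.real_cond_exp_int(2)[OF fq])
  finally show "(\<integral>x. \<bar>real_cond_exp M F f x\<bar> powr q \<partial>M) \<le> (\<integral>x. \<bar>f x\<bar> powr q \<partial>M)" .
qed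

lemma cond_exp_deviation_powr_integral_le:
  fixes r :: real
  assumes F: "subalgebra M F" and r: "1 \<le> r"
    and f: "integrable M f" and fr: "integrable M (\<lambda>x. \<bar>f x\<bar> powr r)"
  shows "integrable M (\<lambda>x. \<bar>real_cond_exp M F f x - expectation f\<bar> powr r)"
    and "(\<integral>x. \<bar>real_cond_exp M F f x - expectation f\<bar> powr r \<partial>M) \<le> 2 powr r * (\<integral>x. \<bar>f x\<bar> powr r \<partial>M)"
proof -
  note cond = cond_exp_abs_powr_integral_le[OF F r f fr]
  have mean: "\<bar>expectation f\<bar> powr r \<le> (\<integral>x. \<bar>f x\<bar> powr r \<partial>M)"
    using jensens_inequality[OF f _ _ fr convex_on_abs_powr[OF r]] by simp
  define bound where "bound x = 2 powr (r - 1) * (\<bar>real_cond_exp M F f x\<bar> powr r + \<bar>- expectation f\<bar> powr r)" for x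
  have int_bound: "integrable M bound" unfolding bound_def using cond(1) by simp
  have le_bound: "\<bar>real_cond_exp M F f x - expectation f\<bar> powr r \<le> bound x" for x
    unfolding bound_def using abs_add_powr_le[OF r, of _ "- expectation f"] by simp
  show int: "integrable M (\<lambda>x. \<bar>real_cond_exp M F f x - expectation f\<bar> powr r)"
    by (rule Bochner_Integration.integrable_bound[OF int_bound]) (use le_bound in \<open>auto intro!: AE_I2 order.trans[OF _ abs_ge_self]\<close>)
  have "(\<integral>x. \<bar>real_cond_exp M F f x - expectation f\<bar> powr r \<partial>M) \<le> (\<integral>x. bound x \<partial>M)"
    by (rule integral_mono[OF int int_bound le_bound])
  also have "\<dots> = 2 powr (r - 1) * ((\<integral>x. \<bar>real_cond_exp M F f x\<bar> powr r \<partial>M) + \<bar>expectation f\<bar> powr r)"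
    unfolding bound_def using cond(1) by (simp add: prob_space)
  also have "\<dots> \<le> 2 powr (r - 1) * (2 * (\<integral>x. \<bar>f x\<bar> powr r \<partial>M))"
    using cond(2) mean by (intro mult_left_mono) auto
  also have "\<dots> = 2 powr r * (\<integral>x. \<bar>f x\<bar> powr r \<partial>M)" by (simp add: powr_diff)
  finally show "(\<integral>x. \<bar>real_cond_exp M F f x - expectation f\<bar> powr r \<partial>M) \<le> 2 powr r * (\<integral>x. \<bar>f x\<bar> powr r \<partial>M)" .
qed


lemma cond_exp_deviation_powr_integral_add_le:
  fixes r :: real
  assumes F: "subalgebra M F" and r: "1 \<le> r" and f: "integrable M f" and g: "integrable M g"
    and fr: "integrable M (\<lambda>x. \<bar>real_cond_exp M F f x - expectation f\<bar> powr r)"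
    and gr: "integrable M (\<lambda>x. \<bar>real_cond_exp M F g x - expectation g\<bar> powr r)"
  shows "integrable M (\<lambda>x. \<bar>real_cond_exp M F (\<lambda>x. f x + g x) x - expectation (\<lambda>x. f x + g x)\<bar> powr r)"
    and "(\<integral>x. \<bar>real_cond_exp M F (\<lambda>x. f x + g x) x - expectation (\<lambda>x. f x + g x)\<bar> powr r \<partial>M)
          \<le> 2 powr (r - 1) * ((\<integral>x. \<bar>real_cond_exp M F f x - expectation f\<bar> powr r \<partial>M)
                              + (\<integral>x. \<bar>real_cond_exp M F g x - expectation g\<bar> powr r \<partial>M))"
proof -
  interpret F: sigma_finite_subalgebra M F using sigma_finite_subalgebraI F .
  have [measurable]: "f \<in> borel_measurable M" "g \<in> borel_measurable M"
    using f g by (simp_all add: borel_measurable_integrable)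
  define D where "D h x = real_cond_exp M F h x - expectation h" for h x
  define bound where "bound x = 2 powr (r - 1) * (\<bar>D f x\<bar> powr r + \<bar>D g x\<bar> powr r)" for x
  have int_bound: "integrable M bound" unfolding bound_def D_def using fr gr by simp
  have "AE x in M. D (\<lambda>x. f x + g x) x = D f x + D g x"
    using F.real_cond_exp_add[OF f g] unfolding D_def by eventually_elim (simp add: f g)
  then have le_bound: "AE x in M. \<bar>D (\<lambda>x. f x + g x) x\<bar> powr r \<le> bound x"
    unfolding bound_def by eventually_elim (simp add: abs_add_powr_le[OF r])
  have int: "integrable M (\<lambda>x. \<bar>D (\<lambda>x. f x + g x) x\<bar> powr r)"
    unfolding D_def
    by (rule Bochner_Integration.integrable_bound[OF int_bound])
       (use le_bound in \<open>auto simp: D_def elim!: eventually_mono intro: order.trans[OF _ abs_ge_self]\<close>)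
  then show "integrable M (\<lambda>x. \<bar>real_cond_exp M F (\<lambda>x. f x + g x) x - expectation (\<lambda>x. f x + g x)\<bar> powr r)"
    unfolding D_def .
  have "(\<integral>x. \<bar>D (\<lambda>x. f x + g x) x\<bar> powr r \<partial>M) \<le> (\<integral>x. bound x \<partial>M)"
    by (rule integral_mono_AE[OF int int_bound le_bound])
  also have "\<dots> = 2 powr (r - 1) * ((\<integral>x. \<bar>D f x\<bar> powr r \<partial>M) + (\<integral>x. \<bar>D g x\<bar> powr r \<partial>M))"
    unfolding bound_def D_def using fr gr by simp
  finally show "(\<integral>x. \<bar>real_cond_exp M F (\<lambda>x. f x + g x) x - expectation (\<lambda>x. f x + g x)\<bar> powr r \<partial>M)
          \<le> 2 powr (r - 1) * ((\<integral>x. \<bar>real_cond_exp M F f x - expectation f\<bar> powr r \<partial>M)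
                              + (\<integral>x. \<bar>real_cond_exp M F g x - expectation g\<bar> powr r \<partial>M))"
    unfolding D_def .
qed

lemma cond_exp_centered_abs_powr_integral_le:
  fixes q :: real
  assumes F: "subalgebra M F" and q: "1 \<le> q" and X: "integrable M X"
    and Xq: "integrable M (\<lambda>x. \<bar>X x - expectation X\<bar> powr q)"
  shows "integrable M (\<lambda>x. \<bar>real_cond_exp M F X x - expectation X\<bar> powr q)"
    and "(\<integral>x. \<bar>real_cond_exp M F X x - expectation X\<bar> powr q \<partial>M) \<le> (\<integral>x. \<bar>X x - expectation X\<bar> powr q \<partial>M)"
proof -
  have [measurable]: "X \<in> borel_measurable M" using X by (rule borel_measurable_integrable)
  have Y: "integrable M (\<lambda>x. X x - expectation X)" using X by simp
  note Jensen = cond_exp_abs_powr_integral_le[OF F q Y Xq]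
  have centered: "AE x in M. \<bar>real_cond_exp M F (\<lambda>x. X x - expectation X) x\<bar> powr q
                     = \<bar>real_cond_exp M F X x - expectation X\<bar> powr q"
    using real_cond_exp_diff_const[OF F X, of "expectation X"] by (auto elim!: eventually_mono)
  show "integrable M (\<lambda>x. \<bar>real_cond_exp M F X x - expectation X\<bar> powr q)"
    by (rule integrable_cong_AE_imp[OF Jensen(1) _ centered]) measurable
  show "(\<integral>x. \<bar>real_cond_exp M F X x - expectation X\<bar> powr q \<partial>M) \<le> (\<integral>x. \<bar>X x - expectation X\<bar> powr q \<partial>M)"
    using Jensen(2) integral_cong_AE[OF _ _ centered] by simp
qed

end

section \<open>Pairs of \<open>\<beta>\<close>-mixing sub-\<open>\<sigma>\<close>-algebras\<close>

locale beta_mixing_pair = prob_space M for M :: "'a measure" +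
  fixes A B :: "'a measure" and \<beta> :: real
  assumes subalgebra_A: "subalgebra M A" and subalgebra_B: "subalgebra M B"
    and mixing: "beta_mixing M A B \<beta>"
begin

sublocale A: sigma_finite_subalgebra M A by (rule sigma_finite_subalgebraI[OF subalgebra_A])
sublocale B: sigma_finite_subalgebra M B by (rule sigma_finite_subalgebraI[OF subalgebra_B])

lemma mixing_coefficient_nonneg: "0 \<le> \<beta>"
  using mixing sets.empty_sets unfolding beta_mixing_def by fastforce

lemma covariance_indicator_diffs_le:
  assumes a: "a1 \<in> sets A" "a2 \<in> sets A" and b: "b1 \<in> sets B" "b2 \<in> sets B"
  shows "covariance M (\<lambda>x. indicator a1 x - indicator a2 x) (\<lambda>x. indicator b1 x - indicator b2 x) \<le> 4 * \<beta>"
proof -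
  have sets_M: "a1 \<in> sets M" "a2 \<in> sets M" "b1 \<in> sets M" "b2 \<in> sets M"
    using a b subalgebra_A subalgebra_B by (auto simp: subalgebra_def)
  have mix: "\<bar>measure M (a \<inter> b) - measure M a * measure M b\<bar> \<le> \<beta>" if "a \<in> sets A" "b \<in> sets B" for a b
    using mixing that unfolding beta_mixing_def by blast
  have product: "(\<lambda>x. (indicator a1 x - indicator a2 x) * (indicator b1 x - indicator b2 x) :: real)
     = (\<lambda>x. indicator (a1 \<inter> b1) x - indicator (a2 \<inter> b1) x - indicator (a1 \<inter> b2) x + indicator (a2 \<inter> b2) x)"
    by (auto simp: indicator_def fun_eq_iff)
  have int: "integrable M (indicator S :: _ \<Rightarrow> real)" if "S \<in> sets M" for S
    using that by (intro integrable_real_indicator) (auto simp: less_top[symmetric])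
  have integral_product: "(\<integral>x. (indicator a1 x - indicator a2 x) * (indicator b1 x - indicator b2 x) \<partial>M)
    = measure M (a1 \<inter> b1) - measure M (a2 \<inter> b1) - measure M (a1 \<inter> b2) + measure M (a2 \<inter> b2)"
    unfolding product using sets_M by (simp add: int)
  have integral_a: "(\<integral>x. indicator a1 x - indicator a2 x \<partial>M) = measure M a1 - measure M a2"
    and integral_b: "(\<integral>x. indicator b1 x - indicator b2 x \<partial>M) = measure M b1 - measure M b2"
    using sets_M by (simp_all add: int)
  have "covariance M (\<lambda>x. indicator a1 x - indicator a2 x) (\<lambda>x. indicator b1 x - indicator b2 x)
    = (measure M (a1 \<inter> b1) - measure M a1 * measure M b1) - (measure M (a2 \<inter> b1) - measure M a2 * measure M b1)
      - (measure M (a1 \<inter> b2) - measure M a1 * measure M b2) + (measure M (a2 \<inter> b2) - measure M a2 * measure M b2)"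
    unfolding covariance_def integral_product integral_a integral_b by (simp add: algebra_simps)
  then show ?thesis
    using mix[OF a(1) b(1)] mix[OF a(2) b(1)] mix[OF a(1) b(2)] mix[OF a(2) b(2)] by (simp add: abs_le_iff)
qed

lemma covariance_le:
  assumes U: "U \<in> borel_measurable A" "\<And>x. x \<in> space M \<Longrightarrow> \<bar>U x\<bar> \<le> l"
    and S: "S \<in> borel_measurable B" "\<And>x. x \<in> space M \<Longrightarrow> \<bar>S x\<bar> \<le> 1"
  shows "covariance M U S \<le> l * (4 * \<beta>)"
proof (rule covariance_le_of_indicator_diffs[OF subalgebra_A U])
  show "integrable M S"
    using measurable_from_subalg[OF subalgebra_B S(1)] S(2) by (intro integrable_const_bound[where B=1]) auto
  fix a1 a2 assume a: "a1 \<in> sets A" "a2 \<in> sets A"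
  then have "(\<lambda>x. indicator a1 x - indicator a2 x :: real) \<in> borel_measurable A"
    by measurable
  then have "(\<lambda>x. indicator a1 x - indicator a2 x :: real) \<in> borel_measurable M"
    by (rule measurable_from_subalg[OF subalgebra_A])
  then have "integrable M (\<lambda>x. indicator a1 x - indicator a2 x :: real)"
    by (intro integrable_const_bound[where B=1]) (auto simp: indicator_def)
  then have "covariance M S (\<lambda>x. indicator a1 x - indicator a2 x) \<le> 1 * (4 * \<beta>)"
    using covariance_indicator_diffs_le[OF a]
    by (intro covariance_le_of_indicator_diffs[OF subalgebra_B S]) (auto simp: covariance_commute)
  then show "covariance M (\<lambda>x. indicator a1 x - indicator a2 x) S \<le> 4 * \<beta>"
    by (simp add: covariance_commute)
qed

lemma bounded_cond_exp_deviation_powr_integral_le: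
  assumes r: "1 \<le> r"
    and U: "U \<in> borel_measurable A" and U_bounded: "\<And>x. x \<in> space M \<Longrightarrow> \<bar>U x\<bar> \<le> l"
  shows "integrable M (\<lambda>x. \<bar>real_cond_exp M B U x - expectation U\<bar> powr r)"
    and "(\<integral>x. \<bar>real_cond_exp M B U x - expectation U\<bar> powr r \<partial>M) \<le> 2 powr (r + 1) * \<beta> * l powr r"
proof -
  have UM [measurable]: "U \<in> borel_measurable M" using measurable_from_subalg[OF subalgebra_A U] .
  obtain x0 where "x0 \<in> space M" using not_empty by blast
  then have l: "0 \<le> l" using U_bounded by (meson abs_ge_zero order.trans)
  have int_U: "integrable M U" by (rule integrable_const_bound[where B=l]) (use U_bounded in auto)
  define V where "V x = real_cond_exp M B U x - expectation U" for x
  have [measurable]: "V \<in> borel_measurable M" unfolding V_def by measurable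
  have V_bounded: "AE x in M. \<bar>V x\<bar> \<le> 2 * l"
    unfolding V_def by (rule abs_cond_exp_deviation_le[OF subalgebra_B UM U_bounded])
  have int_V: "integrable M V" using V_bounded by (intro integrable_const_bound[where B="2 * l"]) auto
  have Vr_le: "AE x in M. \<bar>V x\<bar> powr r \<le> (2 * l) powr (r - 1) * \<bar>V x\<bar>"
    using V_bounded by eventually_elim (rule abs_powr_le_mult_abs[OF r])
  have int_Vr: "integrable M (\<lambda>x. \<bar>V x\<bar> powr r)"
    using V_bounded r l
    by (intro integrable_const_bound[where B="(2 * l) powr r"]) (auto intro!: powr_mono2 elim!: eventually_mono)
  then show "integrable M (\<lambda>x. \<bar>real_cond_exp M B U x - expectation U\<bar> powr r)"
    unfolding V_def .
  obtain b1 b2 where b: "b1 \<in> sets B" "b2 \<in> sets B"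
    and deviation: "(\<integral>x. \<bar>V x\<bar> \<partial>M) = covariance M (\<lambda>x. indicator b1 x - indicator b2 x) U"
    using integral_abs_cond_exp_deviation[OF subalgebra_B int_U] unfolding V_def by blast
  have sign_B: "(\<lambda>x. indicator b1 x - indicator b2 x :: real) \<in> borel_measurable B"
    using b by measurable
  have "(\<integral>x. \<bar>V x\<bar> powr r \<partial>M) \<le> (\<integral>x. (2 * l) powr (r - 1) * \<bar>V x\<bar> \<partial>M)"
    by (rule integral_mono_AE[OF int_Vr _ Vr_le]) (use int_V in simp)
  also have "\<dots> = (2 * l) powr (r - 1) * covariance M U (\<lambda>x. indicator b1 x - indicator b2 x)"
    by (simp add: deviation covariance_commute)
  also have "\<dots> \<le> (2 * l) powr (r - 1) * (l * (4 * \<beta>))"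
    by (intro mult_left_mono covariance_le[OF U U_bounded sign_B]) (auto simp: indicator_def)
  also have "\<dots> = 2 powr (r + 1) * \<beta> * l powr r"
  proof (cases "l = 0")
    case False
    with l r show ?thesis by (simp add: powr_mult powr_diff powr_add field_simps)
  qed simp
  finally show "(\<integral>x. \<bar>real_cond_exp M B U x - expectation U\<bar> powr r \<partial>M) \<le> 2 powr (r + 1) * \<beta> * l powr r"
    unfolding V_def .
qed

lemma cond_exp_deviation_powr_integral_le_split:
  assumes r: "1 \<le> r" and Z: "Z \<in> borel_measurable A" "integrable M Z" and l: "0 \<le> l"
    and int_large: "integrable M (\<lambda>x. \<bar>large_part l (Z x - expectation Z)\<bar> powr r)"
  shows "integrable M (\<lambda>x. \<bar>real_cond_exp M B Z x - expectation Z\<bar> powr r)"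
    and "(\<integral>x. \<bar>real_cond_exp M B Z x - expectation Z\<bar> powr r \<partial>M)
          \<le> 4 powr r * (\<beta> * l powr r + (\<integral>x. \<bar>large_part l (Z x - expectation Z)\<bar> powr r \<partial>M) / 2)"
proof -
  define c where "c = expectation Z"
  define Z2 where "Z2 x = large_part l (Z x - c)" for x
  define Z1 where "Z1 x = Z x - c - Z2 x" for x
  have [measurable]: "Z \<in> borel_measurable M" using measurable_from_subalg[OF subalgebra_A Z(1)] .
  have Z1A: "Z1 \<in> borel_measurable A" using Z(1) unfolding Z1_def Z2_def by measurable
  have Z1_bounded: "\<bar>Z1 x\<bar> \<le> l" for x using l by (simp add: Z1_def Z2_def large_part_def)
  have int_Z1: "integrable M Z1"
    using measurable_from_subalg[OF subalgebra_A Z1A] Z1_bounded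
    by (intro integrable_const_bound[where B=l]) auto
  have "integrable M (\<lambda>x. Z x - c - Z1 x)" using Z(2) int_Z1 by simp
  then have int_Z2: "integrable M Z2" by (simp add: Z1_def)
  have int_Z2r: "integrable M (\<lambda>x. \<bar>Z2 x\<bar> powr r)" using int_large unfolding Z2_def c_def .
  note bounded = bounded_cond_exp_deviation_powr_integral_le[OF r Z1A Z1_bounded]
  note large = cond_exp_deviation_powr_integral_le[OF subalgebra_B r int_Z2 int_Z2r]
  note sum = cond_exp_deviation_powr_integral_add_le[OF subalgebra_B r int_Z1 int_Z2 bounded(1) large(1)]
  have Z1_plus_Z2: "(\<lambda>x. Z1 x + Z2 x) = (\<lambda>x. Z x - c)" by (simp add: Z1_def)
  have same: "AE x in M. \<bar>real_cond_exp M B (\<lambda>x. Z1 x + Z2 x) x - expectation (\<lambda>x. Z1 x + Z2 x)\<bar> powr r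
                  = \<bar>real_cond_exp M B Z x - c\<bar> powr r"
    using real_cond_exp_diff_const[OF subalgebra_B Z(2), of c] Z(2)
    unfolding Z1_plus_Z2 by (auto simp: c_def prob_space elim!: eventually_mono)
  show int: "integrable M (\<lambda>x. \<bar>real_cond_exp M B Z x - expectation Z\<bar> powr r)"
    unfolding c_def[symmetric] by (rule integrable_cong_AE_imp[OF sum(1) _ same]) measurable
  have "(\<integral>x. \<bar>real_cond_exp M B Z x - c\<bar> powr r \<partial>M)
      = (\<integral>x. \<bar>real_cond_exp M B (\<lambda>x. Z1 x + Z2 x) x - expectation (\<lambda>x. Z1 x + Z2 x)\<bar> powr r \<partial>M)"
    using integral_cong_AE[OF _ _ same] by simp
  also have "\<dots> \<le> 2 powr (r - 1) * ((\<integral>x. \<bar>real_cond_exp M B Z1 x - expectation Z1\<bar> powr r \<partial>M)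
                              + (\<integral>x. \<bar>real_cond_exp M B Z2 x - expectation Z2\<bar> powr r \<partial>M))"
    by (rule sum(2))
  also have "\<dots> \<le> 2 powr (r - 1) * (2 powr (r + 1) * \<beta> * l powr r + 2 powr r * (\<integral>x. \<bar>Z2 x\<bar> powr r \<partial>M))"
    using bounded(2) large(2) by (intro mult_left_mono add_mono) auto
  also have "\<dots> = 4 powr r * (\<beta> * l powr r + (\<integral>x. \<bar>Z2 x\<bar> powr r \<partial>M) / 2)"
    by (simp add: powr_add powr_diff field_simps flip: powr_mult)
  finally show "(\<integral>x. \<bar>real_cond_exp M B Z x - expectation Z\<bar> powr r \<partial>M)
          \<le> 4 powr r * (\<beta> * l powr r + (\<integral>x. \<bar>large_part l (Z x - expectation Z)\<bar> powr r \<partial>M) / 2)"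
    unfolding Z2_def c_def .
qed

lemma iterated_cond_exp_powr_integral_le_bounded:
  assumes r: "1 \<le> r" and X [measurable]: "X \<in> borel_measurable M"
    and N: "0 \<le> N" and X_bounded: "AE x in M. \<bar>X x - expectation X\<bar> \<le> N"
  shows "integrable M (\<lambda>x. \<bar>real_cond_exp M B (real_cond_exp M A X) x - expectation X\<bar> powr r)"
    and "(\<integral>x. \<bar>real_cond_exp M B (real_cond_exp M A X) x - expectation X\<bar> powr r \<partial>M)
          \<le> 4 powr r * \<beta> * N powr r"
proof -
  define c where "c = expectation X"
  define Z where "Z = real_cond_exp M A X"
  have int_X: "integrable M X"
    using X_bounded by (intro integrable_const_bound[where B="N + \<bar>c\<bar>"]) (auto simp: c_def elim!: eventually_mono)
  have ZA: "Z \<in> borel_measurable A" and [measurable]: "Z \<in> borel_measurable M"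
    unfolding Z_def by simp_all
  have int_Z: "integrable M Z" and EZ: "expectation Z = c"
    unfolding Z_def c_def using A.real_cond_exp_int[OF int_X] by auto
  have "AE x in M. Z x \<le> c + N"
    unfolding Z_def using X_bounded by (intro A.real_cond_exp_le_c[OF int_X]) (auto simp: c_def elim!: eventually_mono)
  moreover have "AE x in M. c - N \<le> Z x"
    unfolding Z_def using X_bounded by (intro A.real_cond_exp_ge_c[OF int_X]) (auto simp: c_def elim!: eventually_mono)
  ultimately have no_large: "AE x in M. \<bar>large_part N (Z x - c)\<bar> powr r = 0"
    by eventually_elim (simp add: large_part_def abs_le_iff)
  have int_large: "integrable M (\<lambda>x. \<bar>large_part N (Z x - c)\<bar> powr r)"
    using no_large by (intro integrable_cong_AE_imp[OF integrable_zero]) (auto elim!: eventually_mono)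
  have large: "(\<integral>x. \<bar>large_part N (Z x - c)\<bar> powr r \<partial>M) = 0"
    using integral_cong_AE[of _ M "\<lambda>_. 0", OF _ _ no_large] by simp
  note split = cond_exp_deviation_powr_integral_le_split[OF r ZA int_Z N, unfolded EZ, OF int_large]
  show "integrable M (\<lambda>x. \<bar>real_cond_exp M B (real_cond_exp M A X) x - expectation X\<bar> powr r)"
    using split(1) unfolding Z_def c_def .
  show "(\<integral>x. \<bar>real_cond_exp M B (real_cond_exp M A X) x - expectation X\<bar> powr r \<partial>M)
          \<le> 4 powr r * \<beta> * N powr r"
    using split(2) large unfolding Z_def c_def by simp
qed

lemma iterated_cond_exp_powr_integral_le_truncated:
  assumes r: "1 \<le> r" "r < q" and l: "0 < l" and X: "integrable M X"
    and Xq: "integrable M (\<lambda>x. \<bar>X x - expectation X\<bar> powr q)"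
  shows "integrable M (\<lambda>x. \<bar>real_cond_exp M B (real_cond_exp M A X) x - expectation X\<bar> powr r)"
    and "(\<integral>x. \<bar>real_cond_exp M B (real_cond_exp M A X) x - expectation X\<bar> powr r \<partial>M)
          \<le> 4 powr r * (\<beta> * l powr r + l powr (r - q) * (\<integral>x. \<bar>X x - expectation X\<bar> powr q \<partial>M) / 2)"
proof -
  define c where "c = expectation X"
  define Z where "Z = real_cond_exp M A X"
  have ZA: "Z \<in> borel_measurable A" and [measurable]: "Z \<in> borel_measurable M"
    unfolding Z_def by simp_all
  have int_Z: "integrable M Z" and EZ: "expectation Z = c"
    unfolding Z_def c_def using A.real_cond_exp_int[OF X] by auto
  have "1 \<le> q" using r by simp
  note Jensen = cond_exp_centered_abs_powr_integral_le[OF subalgebra_A this X Xq, folded Z_def c_def]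
  have large_le: "\<bar>large_part l (Z x - c)\<bar> powr r \<le> l powr (r - q) * \<bar>Z x - c\<bar> powr q" for x
    by (rule abs_large_part_powr_le[OF l r(2)])
  have int_large: "integrable M (\<lambda>x. \<bar>large_part l (Z x - c)\<bar> powr r)"
    by (rule Bochner_Integration.integrable_bound[OF integrable_mult_right[OF Jensen(1)]])
       (use large_le in \<open>auto intro!: AE_I2 order.trans[OF _ abs_ge_self]\<close>)
  have "(\<integral>x. \<bar>large_part l (Z x - c)\<bar> powr r \<partial>M) \<le> (\<integral>x. l powr (r - q) * \<bar>Z x - c\<bar> powr q \<partial>M)"
    using int_large Jensen(1) large_le by (intro integral_mono) auto
  also have "\<dots> \<le> l powr (r - q) * (\<integral>x. \<bar>X x - c\<bar> powr q \<partial>M)"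
    using Jensen(2) by (simp add: mult_left_mono)
  finally have large: "(\<integral>x. \<bar>large_part l (Z x - c)\<bar> powr r \<partial>M) \<le> l powr (r - q) * (\<integral>x. \<bar>X x - c\<bar> powr q \<partial>M)" .
  note split = cond_exp_deviation_powr_integral_le_split[OF r(1) ZA int_Z less_imp_le[OF l], unfolded EZ, OF int_large]
  show "integrable M (\<lambda>x. \<bar>real_cond_exp M B (real_cond_exp M A X) x - expectation X\<bar> powr r)"
    using split(1) unfolding Z_def c_def .
  have "(\<integral>x. \<bar>real_cond_exp M B Z x - c\<bar> powr r \<partial>M)
        \<le> 4 powr r * (\<beta> * l powr r + l powr (r - q) * (\<integral>x. \<bar>X x - c\<bar> powr q \<partial>M) / 2)"
    using split(2) by (rule order.trans) (use large in \<open>intro mult_left_mono add_left_mono divide_right_mono; simp\<close>)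
  then show "(\<integral>x. \<bar>real_cond_exp M B (real_cond_exp M A X) x - expectation X\<bar> powr r \<partial>M)
          \<le> 4 powr r * (\<beta> * l powr r + l powr (r - q) * (\<integral>x. \<bar>X x - expectation X\<bar> powr q \<partial>M) / 2)"
    unfolding Z_def c_def .
qed

lemma iterated_cond_exp_powr_integral_le_Lp:
  assumes r: "1 \<le> r" "r < q" and \<beta>: "0 < \<beta>" and X [measurable]: "X \<in> borel_measurable M"
    and Xq: "integrable M (\<lambda>x. \<bar>X x - expectation X\<bar> powr q)"
  shows "integrable M (\<lambda>x. \<bar>real_cond_exp M B (real_cond_exp M A X) x - expectation X\<bar> powr r)"
    and "(\<integral>x. \<bar>real_cond_exp M B (real_cond_exp M A X) x - expectation X\<bar> powr r \<partial>M)
          \<le> (10 * \<beta> powr (1 / r - 1 / q) * (\<integral>x. \<bar>X x - expectation X\<bar> powr q \<partial>M) powr (1 / q)) powr r"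
      (is "?moment \<le> ?bound")
proof -
  define Q where "Q = (\<integral>x. \<bar>X x - expectation X\<bar> powr q \<partial>M)"
  have "integrable M (\<lambda>x. X x - expectation X)"
    using r by (intro integrable_of_integrable_abs_powr[OF _ _ Xq]) auto
  from Bochner_Integration.integrable_add[OF this integrable_const[of "expectation X"]]
  have int_X: "integrable M X" by simp
  have "0 \<le> Q" unfolding Q_def by simp
  then consider (degenerate) "Q = 0" | (positive) "0 < Q" by linarith
  then have "integrable M (\<lambda>x. \<bar>real_cond_exp M B (real_cond_exp M A X) x - expectation X\<bar> powr r)
    \<and> ?moment \<le> ?bound"
  proof cases
    case degenerate
    \<comment> \<open>Then X is almost surely constant.\<close>
    then have "AE x in M. \<bar>X x - expectation X\<bar> powr q = 0"
      using Xq integral_nonneg_eq_0_iff_AE[of M "\<lambda>x. \<bar>X x - expectation X\<bar> powr q"] unfolding Q_def by simp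
    then have "AE x in M. \<bar>X x - expectation X\<bar> \<le> 0" by (auto elim!: eventually_mono)
    from iterated_cond_exp_powr_integral_le_bounded[OF r(1) X order.refl this]
    show ?thesis using degenerate r unfolding Q_def by simp
  next
    case positive
    define l where "l = (Q / \<beta>) powr (1 / q)"
    have "0 < l" using positive \<beta> unfolding l_def by simp
    note truncated = iterated_cond_exp_powr_integral_le_truncated[OF r this int_X Xq, folded Q_def]
    show ?thesis
      using truncated truncation_bound_at_balanced_level[OF r \<beta> positive, folded l_def] unfolding Q_def by simp
  qed
  then show "integrable M (\<lambda>x. \<bar>real_cond_exp M B (real_cond_exp M A X) x - expectation X\<bar> powr r)"
    and "?moment \<le> ?bound" by auto
qed

lemma lp_norm_iterated_cond_exp_le_Linf:
  assumes r: "1 \<le> r" and X: "X \<in> borel_measurable M"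
    and finite: "lp_norm M \<infinity> (\<lambda>x. X x - expectation X) < \<infinity>"
  shows "lp_norm M (ennreal r) (\<lambda>x. real_cond_exp M B (real_cond_exp M A X) x - expectation X)
         \<le> ennreal (10 * \<beta> powr (1 / r)) * lp_norm M \<infinity> (\<lambda>x. X x - expectation X)"
proof -
  define N where "N = enn2real (lp_norm M \<infinity> (\<lambda>x. X x - expectation X))"
  have N: "0 \<le> N" and norm_N: "lp_norm M \<infinity> (\<lambda>x. X x - expectation X) = ennreal N"
    using finite unfolding N_def by (auto simp: less_top)
  have "AE x in M. ennreal \<bar>X x - expectation X\<bar> \<le> ennreal N"
    using esssup_AE[of "\<lambda>x. ennreal \<bar>X x - expectation X\<bar>" M] norm_N by (simp add: lp_norm_def)
  then have "AE x in M. \<bar>X x - expectation X\<bar> \<le> N" using N by (auto elim!: eventually_mono)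
  note moments = iterated_cond_exp_powr_integral_le_bounded[OF r X N this]
  have "4 powr r * \<beta> * N powr r \<le> (10 * \<beta> powr (1 / r) * N) powr r"
    using r N mixing_coefficient_nonneg
    by (simp add: powr_mult powr_powr mult_right_mono powr_mono2)
  then have "lp_norm M (ennreal r) (\<lambda>x. real_cond_exp M B (real_cond_exp M A X) x - expectation X)
             \<le> ennreal (10 * \<beta> powr (1 / r) * N)"
    using moments r N by (intro lp_norm_le_if_powr_integral_le) auto
  then show ?thesis
    unfolding norm_N using N mixing_coefficient_nonneg by (simp add: ennreal_mult)
qed

lemma lp_norm_iterated_cond_exp_le_Lp:
  assumes r: "1 \<le> r" "r < q" and \<beta>: "0 < \<beta>" and X: "X \<in> borel_measurable M"
    and finite: "lp_norm M (ennreal q) (\<lambda>x. X x - expectation X) < \<infinity>"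
  shows "lp_norm M (ennreal r) (\<lambda>x. real_cond_exp M B (real_cond_exp M A X) x - expectation X)
         \<le> ennreal (10 * \<beta> powr (1 / r - 1 / q)) * lp_norm M (ennreal q) (\<lambda>x. X x - expectation X)"
proof -
  have Xq: "integrable M (\<lambda>x. \<bar>X x - expectation X\<bar> powr q)"
    using r X finite by (intro integrable_abs_powr_if_lp_norm_finite) auto
  note moments = iterated_cond_exp_powr_integral_le_Lp[OF r \<beta> X Xq]
  have "lp_norm M (ennreal r) (\<lambda>x. real_cond_exp M B (real_cond_exp M A X) x - expectation X)
        \<le> ennreal (10 * \<beta> powr (1 / r - 1 / q) * (\<integral>x. \<bar>X x - expectation X\<bar> powr q \<partial>M) powr (1 / q))"
    using moments r by (intro lp_norm_le_if_powr_integral_le) auto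
  then show ?thesis
    using r Xq by (simp add: lp_norm_ennreal_eq ennreal_mult)
qed

end

theorem proposition2p7:
  fixes M A B :: "'a measure" and \<beta> r :: real and p :: ennreal and X :: "'a \<Rightarrow> real"
  assumes "prob_space M"
    and "0 < \<beta>" and "\<beta> \<le> 1"
    and "subalgebra M A" and "subalgebra M B"
    and "beta_mixing M A B \<beta>"
    and "1 \<le> r" and "ennreal r < p"
    and "X \<in> borel_measurable M" and "lp_norm M p X < \<infinity>"
  shows "lp_norm M (ennreal r)
           (\<lambda>x. real_cond_exp M B (real_cond_exp M A X) x - prob_space.expectation M X)
         \<le> ennreal (10 * \<beta> powr (1 / r - recip_exp p))
           * lp_norm M p (\<lambda>x. X x - prob_space.expectation M X)"
proof -
  interpret beta_mixing_pair M A B \<beta>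
    using assms by (simp add: beta_mixing_pair_def beta_mixing_pair_axioms_def)
  consider (infinite_norm) "lp_norm M p (\<lambda>x. X x - expectation X) = \<infinity>"
    | (Linf) "p = \<infinity>" "lp_norm M p (\<lambda>x. X x - expectation X) < \<infinity>"
    | (Lp) q where "p = ennreal q" "r < q" "lp_norm M p (\<lambda>x. X x - expectation X) < \<infinity>"
    using \<open>ennreal r < p\<close> \<open>1 \<le> r\<close>
    by (cases p; cases "lp_norm M p (\<lambda>x. X x - expectation X) = \<infinity>") (auto simp: less_top ennreal_less_iff)
  then show ?thesis
  proof cases
    case infinite_norm
    then show ?thesis using \<open>0 < \<beta>\<close> by (simp add: ennreal_mult_top)
  next
    case Linf
    then show ?thesis
      using lp_norm_iterated_cond_exp_le_Linf assms by (simp add: recip_exp_def)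
  next
    case (Lp q)
    then show ?thesis
      using lp_norm_iterated_cond_exp_le_Lp[of r q] assms by (simp add: recip_exp_def)
  qed
qed

end
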